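(* Let $n\geq 2$ and let $L_n$ be the graph of linear $[n]$-phenylene (defined in the context). Then the base polynomial counting distances between pairs of degree-2 vertices of $L_n$ is \begin{eqnarray*} H^{2,2}_{b}(L_{n}) &=& 6x+(3n-2)x^{3}+2\sum_{k=2}^{n}(n-k+3)x^{3k-2}+4\sum_{k=1}^{n-1}x^{3k-1}\\ &&+6x^{3n-1}+2\sum_{k=2}^{n}(n-k)x^{3k}+2x^{3n}. \end{eqnarray*}
   Context: All graphs are finite, simple and connected; $d(u,v)$ denotes the shortest-path distance and $d_u$ the degree of a vertex $u$. For a graph $G$ and degrees $p\le q$, the base polynomial is $H^{p,q}_{b}(G)=\sum x^{d(u,v)}$, where the sum runs over all unordered pairs $\{u,v\}$ of distinct vertices of $G$ such that one of $u,v$ has degree $p$ and the other has degree $q$ (for $p=q$: both have degree $p$). Linear $[n]$-phenylene $L_n$: take $n$ hexagons $H_1,\dots,H_n$; hexagon $H_i$ is the 6-cycle $a_i b_i c_i d_i e_i f_i a_i$. For each $i=1,\dots,n-1$ add the two edges $b_i f_{i+1}$ and $c_i e_{i+1}$, so that $b_i c_i e_{i+1} f_{i+1}$ is a 4-cycle joining consecutive hexagons. Thus $L_n$ has $6n$ vertices, $n$ hexagons and $n-1$ squares, $2n+4$ vertices of degree 2 and $4n-4$ vertices of degree 3. *)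

theory Defs
  imports "HOL-Computational_Algebra.Polynomial"
begin

definition walk :: "'a set \<Rightarrow> ('a \<Rightarrow> 'a \<Rightarrow> bool) \<Rightarrow> 'a list \<Rightarrow> bool" where
  "walk V E xs \<longleftrightarrow> xs \<noteq> [] \<and> set xs \<subseteq> V \<and>
     (\<forall>i. Suc i < length xs \<longrightarrow> E (xs ! i) (xs ! Suc i))"

definition gdist :: "'a set \<Rightarrow> ('a \<Rightarrow> 'a \<Rightarrow> bool) \<Rightarrow> 'a \<Rightarrow> 'a \<Rightarrow> nat" where
  "gdist V E u v = (LEAST k. \<exists>xs. walk V E xs \<and> hd xs = u \<and> last xs = v \<and> length xs = Suc k)"

definition gdeg :: "'a set \<Rightarrow> ('a \<Rightarrow> 'a \<Rightarrow> bool) \<Rightarrow> 'a \<Rightarrow> nat" where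
  "gdeg V E u = card {v \<in> V. E u v}"

definition deg_pairs :: "'a set \<Rightarrow> ('a \<Rightarrow> 'a \<Rightarrow> bool) \<Rightarrow> nat \<Rightarrow> nat \<Rightarrow> 'a set set" where
  "deg_pairs V E p q = {{u, v} | u v. u \<in> V \<and> v \<in> V \<and> u \<noteq> v \<and>
      ((gdeg V E u = p \<and> gdeg V E v = q) \<or> (gdeg V E u = q \<and> gdeg V E v = p))}"

text \<open>Distance between the two elements of an unordered pair (d is symmetric, Min just
  avoids choosing an orientation).\<close>
definition pair_dist :: "'a set \<Rightarrow> ('a \<Rightarrow> 'a \<Rightarrow> bool) \<Rightarrow> 'a set \<Rightarrow> nat" where
  "pair_dist V E e = Min {gdist V E u v | u v. u \<in> e \<and> v \<in> e \<and> u \<noteq> v}"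

definition base_poly :: "'a set \<Rightarrow> ('a \<Rightarrow> 'a \<Rightarrow> bool) \<Rightarrow> nat \<Rightarrow> nat \<Rightarrow> int poly" where
  "base_poly V E p q = (\<Sum>e\<in>deg_pairs V E p q. monom 1 (pair_dist V E e))"

text \<open>Vertex (i,j), 1 \<le> i \<le> n, j < 6: j = 0,1,2,3,4,5 stands for a_i,b_i,c_i,d_i,e_i,f_i.\<close>
definition phen_V :: "nat \<Rightarrow> (nat \<times> nat) set" where
  "phen_V n = {(i, j). 1 \<le> i \<and> i \<le> n \<and> j < 6}"

definition phen_E0 :: "nat \<Rightarrow> nat \<times> nat \<Rightarrow> nat \<times> nat \<Rightarrow> bool" where
  "phen_E0 n x y \<longleftrightarrow> x \<in> phen_V n \<and> y \<in> phen_V n \<and>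
     ((fst x = fst y \<and> snd y = (snd x + 1) mod 6)
      \<or> (fst y = fst x + 1 \<and> snd x = 1 \<and> snd y = 5)
      \<or> (fst y = fst x + 1 \<and> snd x = 2 \<and> snd y = 4))"

definition phen_E :: "nat \<Rightarrow> nat \<times> nat \<Rightarrow> nat \<times> nat \<Rightarrow> bool" where
  "phen_E n x y \<longleftrightarrow> phen_E0 n x y \<or> phen_E0 n y x"

end

theory Submission
  imports Defs
begin

(* A function f on the vertices with f v = 0 that changes by at most one along every edge, and
   that decreases by exactly one along some edge at every vertex other than v, is the distance
   to v. In L_n the distance has a closed form: inside a hexagon it is the cyclic distance, and
   otherwise a shortest path runs through the squares, every hexagon strictly between the two
   end hexagons costing three edges. The vertices of degree two are a_i and d_i for all i,
   together with e_1, f_1, b_n, c_n. With n = N + 1 and y = x^3, summing x^d over pairs of them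
   gives an expression in A = sum_{e<N} y^e, B = sum_{e<N} e y^e and y^N, and so does the
   claimed polynomial; the two agree modulo (1 - y) A = 1 - y^N and (1 - y) B = y A - N y^N. *)

section \<open>Graph distance and base polynomials\<close>

lemma walk_singleton [simp]: "walk V E [x] \<longleftrightarrow> x \<in> V"
  by (simp add: walk_def)

lemma walk_Cons_Cons [simp]:
  "walk V E (x # y # xs) \<longleftrightarrow> x \<in> V \<and> E x y \<and> walk V E (y # xs)"
  by (auto simp: walk_def nth_Cons less_Suc_eq_0_disj split: nat.splits)

lemma walk_length_lower_bound:
  fixes f :: "'a \<Rightarrow> nat"
  assumes "walk V E xs"
    and "\<And>x y. x \<in> V \<Longrightarrow> y \<in> V \<Longrightarrow> E x y \<Longrightarrow> f x \<le> f y + 1"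
  shows "f (hd xs) \<le> f (last xs) + (length xs - 1)"
  using assms(1)
proof (induction xs rule: induct_list012)
  case (3 x y xs)
  then have "f x \<le> f y + 1" using assms(2) by (auto simp: walk_def)
  with 3 show ?case by simp
qed (simp_all add: walk_def)

lemma walk_descending:
  fixes f :: "'a \<Rightarrow> nat"
  assumes "v \<in> V" "f v = 0"
    and "\<And>x. x \<in> V \<Longrightarrow> x \<noteq> v \<Longrightarrow> \<exists>y\<in>V. E x y \<and> f x = f y + 1"
  shows "u \<in> V \<Longrightarrow> \<exists>xs. walk V E xs \<and> hd xs = u \<and> last xs = v \<and> length xs = Suc (f u)"
proof (induction "f u" arbitrary: u rule: less_induct)
  case less
  show ?case
  proof (cases "u = v")
    case True
    then show ?thesis using assms(1,2) by (intro exI[of _ "[v]"]) simp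
  next
    case False
    then obtain y where y: "y \<in> V" "E u y" "f u = f y + 1" using assms(3) less.prems by blast
    then obtain xs where xs: "walk V E xs" "hd xs = y" "last xs = v" "length xs = Suc (f y)"
      using less.hyps[of y] by auto
    then obtain ys where "xs = y # ys" by (cases xs) (auto simp: walk_def)
    with xs y less.prems show ?thesis by (intro exI[of _ "u # xs"]) auto
  qed
qed

lemma gdist_eqI:
  fixes f :: "'a \<Rightarrow> nat"
  assumes "u \<in> V" "v \<in> V" "f v = 0"
    and lipschitz: "\<And>x y. x \<in> V \<Longrightarrow> y \<in> V \<Longrightarrow> E x y \<Longrightarrow> f x \<le> f y + 1"
    and "\<And>x. x \<in> V \<Longrightarrow> x \<noteq> v \<Longrightarrow> \<exists>y\<in>V. E x y \<and> f x = f y + 1"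
  shows "gdist V E u v = f u"
  unfolding gdist_def
proof (rule Least_equality)
  show "\<exists>xs. walk V E xs \<and> hd xs = u \<and> last xs = v \<and> length xs = Suc (f u)"
    using walk_descending[of v V f E u] assms by blast
next
  fix k assume "\<exists>xs. walk V E xs \<and> hd xs = u \<and> last xs = v \<and> length xs = Suc k"
  then show "f u \<le> k"
    using walk_length_lower_bound[of V E _ f] lipschitz assms(3) by fastforce
qed

lemma sum_doubletons:
  fixes f :: "'a set \<Rightarrow> 'b::comm_semiring_1"
  assumes "finite S"
  shows "2 * (\<Sum>e\<in>{{u, v} |u v. u \<in> S \<and> v \<in> S \<and> u \<noteq> v}. f e) = (\<Sum>u\<in>S. \<Sum>v\<in>S - {u}. f {u, v})"
proof -
  let ?P = "Sigma S (\<lambda>u. S - {u})"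
  let ?h = "\<lambda>(u, v). {u, v}"
  have img: "?h ` ?P = {{u, v} |u v. u \<in> S \<and> v \<in> S \<and> u \<noteq> v}" by auto
  have "(\<Sum>u\<in>S. \<Sum>v\<in>S - {u}. f {u, v}) = (\<Sum>p\<in>?P. f (?h p))"
    using assms by (simp add: sum.Sigma split_def)
  also have "\<dots> = (\<Sum>e\<in>?h ` ?P. \<Sum>p\<in>{p \<in> ?P. ?h p = e}. f (?h p))"
    using assms by (intro sum.image_gen) auto
  also have "\<dots> = (\<Sum>e\<in>?h ` ?P. 2 * f e)"
  proof (rule sum.cong[OF refl])
    fix e assume "e \<in> ?h ` ?P"
    then obtain u v where uv: "u \<in> S" "v \<in> S" "u \<noteq> v" "e = {u, v}" by auto
    then have "{p \<in> ?P. ?h p = e} = {(u, v), (v, u)}" by (auto simp: doubleton_eq_iff)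
    with uv show "(\<Sum>p\<in>{p \<in> ?P. ?h p = e}. f (?h p)) = 2 * f e"
      by (simp add: insert_commute mult_2)
  qed
  finally show ?thesis by (simp add: img sum_distrib_left)
qed

lemma pair_dist_doubleton:
  assumes "u \<noteq> v"
  shows "pair_dist V E {u, v} = min (gdist V E u v) (gdist V E v u)"
proof -
  have "{gdist V E u' v' |u' v'. u' \<in> {u, v} \<and> v' \<in> {u, v} \<and> u' \<noteq> v'}
      = {gdist V E u v, gdist V E v u}"
    using assms by blast
  then show ?thesis by (simp add: pair_dist_def)
qed

lemma base_poly_same_degree:
  fixes V :: "'a set" and E :: "'a \<Rightarrow> 'a \<Rightarrow> bool" and p :: nat
  assumes "finite V"
  defines "S \<equiv> {w \<in> V. gdeg V E w = p}"
  shows "2 * base_poly V E p p = (\<Sum>u\<in>S. \<Sum>v\<in>S - {u}. monom 1 (pair_dist V E {u, v}))"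
proof -
  have "deg_pairs V E p p = {{u, v} |u v. u \<in> S \<and> v \<in> S \<and> u \<noteq> v}"
    unfolding deg_pairs_def S_def by blast
  moreover have "finite S" using assms(1) by (simp add: S_def)
  ultimately show ?thesis
    unfolding base_poly_def by (simp add: sum_doubletons)
qed

section \<open>The distance in linear phenylene\<close>

lemma less_6_cases: "(j::nat) < 6 \<Longrightarrow> j = 0 \<or> j = 1 \<or> j = 2 \<or> j = 3 \<or> j = 4 \<or> j = 5"
  by auto

lemma mod_6_succ_iff_pred: "(j::nat) < 6 \<Longrightarrow> j' < 6 \<Longrightarrow> j = (j' + 1) mod 6 \<longleftrightarrow> j' = (j + 5) mod 6"
  by (drule less_6_cases, drule less_6_cases, elim disjE) simp_all

lemma phen_E_iff:
  "phen_E n (i, j) (i', j') \<longleftrightarrow> (i, j) \<in> phen_V n \<and> (i', j') \<in> phen_V n \<and>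
    ((i' = i \<and> (j' = (j + 1) mod 6 \<or> j' = (j + 5) mod 6)) \<or>
     (i' = i + 1 \<and> ((j = 1 \<and> j' = 5) \<or> (j = 2 \<and> j' = 4))) \<or>
     (i = i' + 1 \<and> ((j = 5 \<and> j' = 1) \<or> (j = 4 \<and> j' = 2))))"
  using mod_6_succ_iff_pred[of j j'] unfolding phen_E_def phen_E0_def phen_V_def by auto

lemma phen_neighbours:
  assumes "(i, j) \<in> phen_V n"
  shows "{y \<in> phen_V n. phen_E n (i, j) y} =
    {(i, (j + 1) mod 6), (i, (j + 5) mod 6)}
    \<union> (if j \<in> {1, 2} \<and> i < n then {(i + 1, 6 - j)} else {})
    \<union> (if j \<in> {4, 5} \<and> 1 < i then {(i - 1, 6 - j)} else {})" (is "_ = ?N")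
proof -
  have "j < 6" "1 \<le> i" "i \<le> n" using assms by (auto simp: phen_V_def)
  then have "(i', j') \<in> phen_V n \<and> phen_E n (i, j) (i', j') \<longleftrightarrow> (i', j') \<in> ?N" for i' j'
    using less_6_cases[OF \<open>j < 6\<close>] by (elim disjE) (auto simp: phen_E_iff phen_V_def)
  then show ?thesis by fast
qed

definition hex_dist :: "nat \<Rightarrow> nat \<Rightarrow> nat" where
  "hex_dist j k = (let d = max j k - min j k in min d (6 - d))"

(* cross_dist j k is the distance from vertex j of H_i to vertex k of H_(i+1): leave H_i at b_i
   or c_i through a square edge. Every further hexagon on the way costs 3 (two edges from f or e
   to b or c on the same side, plus one square edge), whence the formula for phen_dist. *)
definition cross_dist :: "nat \<Rightarrow> nat \<Rightarrow> nat" where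
  "cross_dist j k = 1 + min (hex_dist j 1 + hex_dist 5 k) (hex_dist j 2 + hex_dist 4 k)"

fun phen_dist :: "nat \<times> nat \<Rightarrow> nat \<times> nat \<Rightarrow> nat" where
  "phen_dist (i, j) (i', j') =
     (if i = i' then hex_dist j j'
      else if i < i' then 3 * (i' - i - 1) + cross_dist j j'
      else 3 * (i - i' - 1) + cross_dist j' j)"

lemma hex_dist_sym: "hex_dist j k = hex_dist k j"
  by (simp add: hex_dist_def max.commute min.commute)

lemma phen_dist_sym: "phen_dist u v = phen_dist v u"
  by (cases u; cases v) (auto simp: hex_dist_sym)

lemma phen_dist_self [simp]: "phen_dist u u = 0"
  by (cases u) (simp add: hex_dist_def)

lemma hex_dist_succ:
  assumes "j < 6" "k < 6"
  shows "hex_dist ((j + 1) mod 6) k \<le> hex_dist j k + 1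
    \<and> hex_dist j k \<le> hex_dist ((j + 1) mod 6) k + 1"
  using less_6_cases[OF assms(1)] less_6_cases[OF assms(2)]
  by (elim disjE) (simp_all add: hex_dist_def)

lemma cross_dist_succ:
  assumes "j < 6" "k < 6"
  shows "cross_dist ((j + 1) mod 6) k \<le> cross_dist j k + 1
    \<and> cross_dist j k \<le> cross_dist ((j + 1) mod 6) k + 1
    \<and> cross_dist k ((j + 1) mod 6) \<le> cross_dist k j + 1
    \<and> cross_dist k j \<le> cross_dist k ((j + 1) mod 6) + 1"
  using less_6_cases[OF assms(1)] less_6_cases[OF assms(2)]
  by (elim disjE) (simp_all add: cross_dist_def hex_dist_def)

lemma cross_dist_bridge:
  assumes "b < 6" "(j = 1 \<and> j' = 5) \<or> (j = 2 \<and> j' = 4)"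
  shows "hex_dist j b \<le> cross_dist b j' + 1 \<and> cross_dist b j' \<le> hex_dist j b + 1
    \<and> cross_dist j b \<le> hex_dist j' b + 1 \<and> hex_dist j' b \<le> cross_dist j b + 1
    \<and> cross_dist b j' + 2 \<le> cross_dist b j \<and> cross_dist b j \<le> cross_dist b j' + 4
    \<and> cross_dist j b + 2 \<le> cross_dist j' b \<and> cross_dist j' b \<le> cross_dist j b + 4"
  using less_6_cases[OF assms(1)] assms(2)
  by (elim disjE) (simp_all add: cross_dist_def hex_dist_def)

lemma phen_dist_E0_lipschitz:
  assumes "phen_E0 n x y" "v \<in> phen_V n"
  shows "phen_dist x v \<le> phen_dist y v + 1 \<and> phen_dist y v \<le> phen_dist x v + 1"
proof -
  obtain i j i' j' a b where xyv: "x = (i, j)" "y = (i', j')" "v = (a, b)"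
    by (metis surj_pair)
  have jb: "j < 6" "b < 6" using assms xyv by (auto simp: phen_E0_def phen_V_def)
  have "(i' = i \<and> j' = (j + 1) mod 6) \<or> (i' = i + 1 \<and> ((j = 1 \<and> j' = 5) \<or> (j = 2 \<and> j' = 4)))"
    using assms xyv by (auto simp: phen_E0_def)
  then show ?thesis
  proof
    assume e: "i' = i \<and> j' = (j + 1) mod 6"
    consider "a = i" | "a < i" | "i < a" by linarith
    then show ?thesis
      using e hex_dist_succ[OF jb] cross_dist_succ[OF jb] unfolding xyv
      by cases auto
  next
    assume e: "i' = i + 1 \<and> ((j = 1 \<and> j' = 5) \<or> (j = 2 \<and> j' = 4))"
    consider "a < i" | "a = i" | "a = i + 1" | "i + 1 < a" by linarith
    then show ?thesis
      using e cross_dist_bridge[OF jb(2), of j j'] unfolding xyv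
      by cases auto
  qed
qed

lemma hex_dist_descent:
  assumes "j < 6" "b < 6" "j \<noteq> b"
  shows "hex_dist ((j + 1) mod 6) b + 1 = hex_dist j b
    \<or> hex_dist ((j + 5) mod 6) b + 1 = hex_dist j b"
  using less_6_cases[OF assms(1)] less_6_cases[OF assms(2)] assms(3)
  by (elim disjE) (simp_all add: hex_dist_def)

lemma cross_dist_descent_left:
  assumes "j < 6" "b < 6"
  shows "cross_dist ((j + 1) mod 6) b + 1 = cross_dist j b
    \<or> cross_dist ((j + 5) mod 6) b + 1 = cross_dist j b
    \<or> (j \<in> {1, 2} \<and> hex_dist (6 - j) b + 1 = cross_dist j b
        \<and> cross_dist (6 - j) b = cross_dist j b + 2)"
  using less_6_cases[OF assms(1)] less_6_cases[OF assms(2)]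
  by (elim disjE) (simp_all add: cross_dist_def hex_dist_def)

lemma cross_dist_descent_right:
  assumes "j < 6" "b < 6"
  shows "cross_dist b ((j + 1) mod 6) + 1 = cross_dist b j
    \<or> cross_dist b ((j + 5) mod 6) + 1 = cross_dist b j
    \<or> (j \<in> {4, 5} \<and> hex_dist (6 - j) b + 1 = cross_dist b j
        \<and> cross_dist b (6 - j) = cross_dist b j + 2)"
  using less_6_cases[OF assms(1)] less_6_cases[OF assms(2)]
  by (elim disjE) (simp_all add: cross_dist_def hex_dist_def)

lemma phen_dist_descent_same_hexagon:
  assumes "j < 6" "b < 6" "j \<noteq> b"
  shows "\<exists>j'\<in>{(j + 1) mod 6, (j + 5) mod 6}. phen_dist (i, j) (i, b) = phen_dist (i, j') (i, b) + 1"
  using hex_dist_descent[OF assms] by auto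

lemma phen_dist_descent_rightwards:
  assumes "j < 6" "b < 6" "i < a"
  shows "(\<exists>j'\<in>{(j + 1) mod 6, (j + 5) mod 6}.
        phen_dist (i, j) (a, b) = phen_dist (i, j') (a, b) + 1)
    \<or> (j \<in> {1, 2} \<and> phen_dist (i, j) (a, b) = phen_dist (i + 1, 6 - j) (a, b) + 1)"
proof -
  consider "a = i + 1" | "i + 1 < a" using assms(3) by linarith
  then show ?thesis
    using assms(3) cross_dist_descent_left[OF assms(1,2)] by cases auto
qed

lemma phen_dist_descent_leftwards:
  assumes "j < 6" "b < 6" "a < i"
  shows "(\<exists>j'\<in>{(j + 1) mod 6, (j + 5) mod 6}.
        phen_dist (i, j) (a, b) = phen_dist (i, j') (a, b) + 1)
    \<or> (j \<in> {4, 5} \<and> phen_dist (i, j) (a, b) = phen_dist (i - 1, 6 - j) (a, b) + 1)"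
proof -
  consider "a = i - 1" | "a < i - 1" using assms(3) by linarith
  then show ?thesis
    using assms(3) cross_dist_descent_right[OF assms(1,2)] by cases auto
qed

lemma phen_dist_descent:
  assumes "x \<in> phen_V n" "v \<in> phen_V n" "x \<noteq> v"
  shows "\<exists>y\<in>phen_V n. phen_E n x y \<and> phen_dist x v = phen_dist y v + 1"
proof -
  obtain i j a b where xv: "x = (i, j)" "v = (a, b)" by (metis surj_pair)
  have jb: "j < 6" "b < 6" and "1 \<le> a" "a \<le> n"
    using assms(1,2) xv by (auto simp: phen_V_def)
  note neighbours = phen_neighbours[OF assms(1)[unfolded xv]]
  consider "a = i" | "i < a" | "a < i" by linarith
  then have "\<exists>y\<in>{y \<in> phen_V n. phen_E n (i, j) y}. phen_dist (i, j) (a, b) = phen_dist y (a, b) + 1"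
  proof cases
    case 1
    then show ?thesis
      using phen_dist_descent_same_hexagon[OF jb, of i] assms(3) xv unfolding neighbours by auto
  next
    case 2
    then show ?thesis
      using phen_dist_descent_rightwards[OF jb 2] \<open>a \<le> n\<close> unfolding neighbours by auto
  next
    case 3
    then show ?thesis
      using phen_dist_descent_leftwards[OF jb 3] \<open>1 \<le> a\<close> unfolding neighbours by auto
  qed
  then show ?thesis using xv by auto
qed

lemma gdist_phen:
  assumes "u \<in> phen_V n" "v \<in> phen_V n"
  shows "gdist (phen_V n) (phen_E n) u v = phen_dist u v"
proof (rule gdist_eqI[where f = "\<lambda>x. phen_dist x v"])
  fix x y assume "phen_E n x y"
  then show "phen_dist x v \<le> phen_dist y v + 1"
    using phen_dist_E0_lipschitz[OF _ assms(2)] unfolding phen_E_def by blast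
qed (use assms phen_dist_descent in auto)

section \<open>Pairs of vertices of degree two\<close>

lemma phen_gdeg_eq_2_iff:
  assumes "(i, j) \<in> phen_V n"
  shows "gdeg (phen_V n) (phen_E n) (i, j) = 2
    \<longleftrightarrow> j \<in> {0, 3} \<or> (i = 1 \<and> j \<in> {4, 5}) \<or> (i = n \<and> j \<in> {1, 2})"
proof -
  have "j < 6" "1 \<le> i" "i \<le> n" using assms by (auto simp: phen_V_def)
  then show ?thesis
    unfolding gdeg_def phen_neighbours[OF assms]
    using less_6_cases[OF \<open>j < 6\<close>] by (elim disjE) auto
qed

definition phen_ad :: "nat \<Rightarrow> (nat \<times> nat) set" where
  "phen_ad n = {1..n} \<times> {0, 3}"

definition phen_ends :: "nat \<Rightarrow> (nat \<times> nat) set" where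
  "phen_ends n = {(1, 4), (1, 5), (n, 1), (n, 2)}"

lemma phen_degree_2_vertices:
  assumes "1 \<le> n"
  shows "{u \<in> phen_V n. gdeg (phen_V n) (phen_E n) u = 2} = phen_ad n \<union> phen_ends n"
  using assms phen_gdeg_eq_2_iff by (auto simp: phen_ad_def phen_ends_def phen_V_def)

lemma phen_base_poly_2_2:
  fixes n :: nat
  assumes "1 \<le> n"
  defines "S \<equiv> phen_ad n \<union> phen_ends n"
  shows "2 * base_poly (phen_V n) (phen_E n) 2 2 = (\<Sum>u\<in>S. \<Sum>v\<in>S - {u}. [:0, 1:] ^ phen_dist u v)"
proof -
  have fin: "finite (phen_V n)"
    by (rule finite_subset[of _ "{1..n} \<times> {..<6}"]) (auto simp: phen_V_def)
  have S: "S = {w \<in> phen_V n. gdeg (phen_V n) (phen_E n) w = 2}"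
    using phen_degree_2_vertices[OF assms(1)] by (simp add: S_def)
  have "pair_dist (phen_V n) (phen_E n) {u, v} = phen_dist u v" if "u \<in> S" "v \<in> S - {u}" for u v
  proof -
    from that have "u \<noteq> v" "u \<in> phen_V n" "v \<in> phen_V n" by (auto simp: S)
    then show ?thesis by (simp add: pair_dist_doubleton gdist_phen phen_dist_sym[of v u])
  qed
  then show ?thesis
    unfolding base_poly_same_degree[OF fin] S[symmetric]
    by (intro sum.cong refl) (simp add: monom_altdef)
qed

section \<open>Summing the distance powers\<close>

lemma sum_offdiag_Un:
  fixes f :: "'a \<Rightarrow> 'a \<Rightarrow> 'b::comm_semiring_1"
  assumes "finite C" "finite D" "C \<inter> D = {}" and sym: "\<And>u v. f u v = f v u"
  shows "(\<Sum>u\<in>C \<union> D. \<Sum>v\<in>(C \<union> D) - {u}. f u v) =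
    (\<Sum>u\<in>C. \<Sum>v\<in>C - {u}. f u v) + 2 * (\<Sum>u\<in>C. \<Sum>v\<in>D. f u v) + (\<Sum>u\<in>D. \<Sum>v\<in>D - {u}. f u v)"
proof -
  have split: "(\<Sum>v\<in>(C \<union> D) - {u}. f u v) = (\<Sum>v\<in>C - {u}. f u v) + (\<Sum>v\<in>D - {u}. f u v)" for u
    using assms(1-3) by (subst Un_Diff, intro sum.union_disjoint) auto
  have "(\<Sum>u\<in>C \<union> D. \<Sum>v\<in>(C \<union> D) - {u}. f u v) =
      (\<Sum>u\<in>C. \<Sum>v\<in>C - {u}. f u v) + (\<Sum>u\<in>D. \<Sum>v\<in>C - {u}. f u v)
    + ((\<Sum>u\<in>C. \<Sum>v\<in>D - {u}. f u v) + (\<Sum>u\<in>D. \<Sum>v\<in>D - {u}. f u v))"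
    using assms(1-3) by (simp add: sum.union_disjoint split sum.distrib)
  also have "(\<Sum>u\<in>C. \<Sum>v\<in>D - {u}. f u v) = (\<Sum>u\<in>C. \<Sum>v\<in>D. f u v)"
    using assms(3) by (intro sum.cong refl) (auto intro: arg_cong[where f = "sum _"])
  also have "(\<Sum>u\<in>D. \<Sum>v\<in>C - {u}. f u v) = (\<Sum>u\<in>C. \<Sum>v\<in>D. f u v)"
  proof -
    have "(\<Sum>u\<in>D. \<Sum>v\<in>C - {u}. f u v) = (\<Sum>u\<in>D. \<Sum>v\<in>C. f v u)"
      using assms(3) sym by (intro sum.cong refl) (auto intro: arg_cong[where f = "sum _"])
    then show ?thesis by (simp add: sum.swap[of _ D])
  qed
  finally show ?thesis by (simp add: mult_2 algebra_simps)
qed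

lemma sum_pairs_power_dist:
  fixes y :: "'a::comm_ring_1"
  shows "(\<Sum>i=1..Suc N. \<Sum>i'=1..Suc N. if i = i' then 0 else y ^ (max i i' - min i i')) =
    2 * y * (of_nat N * (\<Sum>e<N. y ^ e) - (\<Sum>e<N. of_nat e * y ^ e))"
proof (induction N)
  case 0
  then show ?case by simp
next
  case (Suc N)
  let ?w = "\<lambda>i i'. if i = i' then 0 else y ^ (max i i' - min i i')"
  let ?m = "Suc (Suc N)"
  have row: "(\<Sum>i=1..Suc N. ?w i ?m) = (\<Sum>e<Suc N. y ^ Suc e)"
  proof -
    have "(\<Sum>i=1..Suc N. ?w i ?m) = (\<Sum>i<Suc N. y ^ (Suc N - i))"
      by (simp add: sum.atLeast1_atMost_eq)
    also have "\<dots> = (\<Sum>e<Suc N. y ^ Suc e)"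
      by (subst sum.nat_diff_reindex[symmetric]) simp
    finally show ?thesis .
  qed
  have col: "(\<Sum>i'=1..Suc N. ?w ?m i') = (\<Sum>i=1..Suc N. ?w i ?m)"
    by (intro sum.cong refl) (simp add: max.commute min.commute)
  have ivl: "{1..?m} = insert ?m {1..Suc N}" "?m \<notin> {1..Suc N}" by auto
  have "(\<Sum>i=1..?m. \<Sum>i'=1..?m. ?w i i') =
      (\<Sum>i=1..Suc N. \<Sum>i'=1..Suc N. ?w i i') + (\<Sum>i'=1..Suc N. ?w ?m i') + (\<Sum>i=1..Suc N. ?w i ?m)"
    unfolding ivl(1) by (simp only: sum.insert[OF _ ivl(2)] finite_atLeastAtMost sum.distrib) simp
  also have "\<dots> = 2 * y * (of_nat N * (\<Sum>e<N. y ^ e) - (\<Sum>e<N. of_nat e * y ^ e))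
      + 2 * (\<Sum>e<Suc N. y ^ Suc e)"
    by (simp only: col row Suc.IH mult_2 add.assoc)
  also have "\<dots> = 2 * y * (of_nat (Suc N) * (\<Sum>e<Suc N. y ^ e) - (\<Sum>e<Suc N. of_nat e * y ^ e))"
    by (simp add: sum_distrib_left sum.distrib algebra_simps)
  finally show ?case .
qed

lemma phen_dist_ad_block:
  fixes x :: "'a::comm_ring_1"
  shows "(\<Sum>j\<in>{0, 3}. \<Sum>j'\<in>{0, 3}. x ^ phen_dist (i, j) (i', j')) =
    (if i = i' then 2 + 2 * x ^ 3 else (2 + 2 * x) * (x ^ 3) ^ (max i i' - min i i'))"
proof -
  have less: "(\<Sum>j\<in>{0, 3}. \<Sum>j'\<in>{0, 3}. x ^ phen_dist (i, j) (i', j'))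
      = (2 + 2 * x) * (x ^ 3) ^ (i' - i)"
    if lt: "i < i'" for i i'
  proof -
    obtain d where d: "i' = Suc (i + d)" using less_imp_Suc_add[OF lt] by blast
    have "cross_dist 0 0 = 3" "cross_dist 0 3 = 4" "cross_dist 3 0 = 4" "cross_dist 3 3 = 3"
      by (simp_all add: cross_dist_def hex_dist_def)
    then have "(\<Sum>j\<in>{0, 3}. \<Sum>j'\<in>{0, 3}. x ^ phen_dist (i, j) (i', j')) =
        x ^ (3 * d + 3) + x ^ (3 * d + 4) + (x ^ (3 * d + 4) + x ^ (3 * d + 3))"
      by (simp add: d)
    also have "\<dots> = (2 + 2 * x) * (x ^ 3) ^ Suc d"
    proof -
      have "x ^ (3 * d + 3) = (x ^ 3) ^ Suc d" "x ^ (3 * d + 4) = x * (x ^ 3) ^ Suc d"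
        unfolding power_mult[symmetric] power_Suc[symmetric] by (simp_all add: numeral_eq_Suc)
      then show ?thesis by (simp only:) (simp add: algebra_simps)
    qed
    finally show ?thesis by (simp add: d)
  qed
  consider "i = i'" | "i < i'" | "i' < i" by linarith
  then show ?thesis
  proof cases
    case 1
    then show ?thesis by (simp add: hex_dist_def)
  next
    case 2
    then show ?thesis using less[OF 2] by simp
  next
    case 3
    have "(\<Sum>j\<in>{0, 3}. \<Sum>j'\<in>{0, 3}. x ^ phen_dist (i, j) (i', j')) =
        (\<Sum>j'\<in>{0, 3}. \<Sum>j\<in>{0, 3}. x ^ phen_dist (i', j') (i, j))"
      by (subst sum.swap) (simp only: phen_dist_sym)
    with 3 show ?thesis unfolding less[OF 3] by simp
  qed
qed

lemma sum_phen_ad_ad: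
  fixes x :: "'a::comm_ring_1"
  defines "y \<equiv> x ^ 3"
  shows "(\<Sum>u\<in>phen_ad (Suc N). \<Sum>v\<in>phen_ad (Suc N) - {u}. x ^ phen_dist u v) =
    2 * of_nat (Suc N) * y
    + (2 + 2 * x) * (2 * y * (of_nat N * (\<Sum>e<N. y ^ e) - (\<Sum>e<N. of_nat e * y ^ e)))"
proof -
  let ?C = "phen_ad (Suc N)"
  let ?I = "{1..Suc N}"
  have "(\<Sum>u\<in>?C. \<Sum>v\<in>?C - {u}. x ^ phen_dist u v)
      = (\<Sum>u\<in>?C. \<Sum>v\<in>?C. x ^ phen_dist u v) - of_nat (card ?C)"
    by (simp add: sum_diff1 phen_ad_def sum_subtractf)
  also have "(\<Sum>u\<in>?C. \<Sum>v\<in>?C. x ^ phen_dist u v) =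
      (\<Sum>i\<in>?I. \<Sum>i'\<in>?I. \<Sum>j\<in>{0, 3}. \<Sum>j'\<in>{0, 3}. x ^ phen_dist (i, j) (i', j'))"
    unfolding phen_ad_def sum.cartesian_product' by (rule sum.cong[OF refl], rule sum.swap)
  also have "\<dots> = (\<Sum>i\<in>?I. \<Sum>i'\<in>?I. (if i = i' then 2 + 2 * y else 0)
      + (2 + 2 * x) * (if i = i' then 0 else y ^ (max i i' - min i i')))"
    unfolding phen_dist_ad_block y_def by (intro sum.cong refl) simp
  also have "\<dots> = of_nat (Suc N) * (2 + 2 * y)
      + (2 + 2 * x) * (2 * y * (of_nat N * (\<Sum>e<N. y ^ e) - (\<Sum>e<N. of_nat e * y ^ e)))"
  proof -
    have "(\<Sum>i\<in>?I. \<Sum>i'\<in>?I. if i = i' then 2 + 2 * y else 0) = of_nat (Suc N) * (2 + 2 * y)"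
      by (simp add: sum.delta del: sum.cl_ivl_Suc)
    then show ?thesis by (simp only: sum.distrib sum_distrib_left[symmetric] sum_pairs_power_dist)
  qed
  finally show ?thesis by (simp add: phen_ad_def card_cartesian_product algebra_simps)
qed

lemma sum_column_first:
  fixes x :: "'a::comm_ring_1"
  shows "(\<Sum>i=1..Suc N. x ^ phen_dist (i, j) (1, k))
    = x ^ hex_dist j k + x ^ cross_dist k j * (\<Sum>e<N. (x ^ 3) ^ e)"
proof -
  have "(\<Sum>i=1..Suc N. x ^ phen_dist (i, j) (1, k))
      = x ^ phen_dist (1, j) (1, k) + (\<Sum>e<N. x ^ phen_dist (Suc (Suc e), j) (1, k))"
    by (simp only: sum.atLeast1_atMost_eq sum.lessThan_Suc_shift One_nat_def)
  also have "(\<Sum>e<N. x ^ phen_dist (Suc (Suc e), j) (1, k))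
      = (\<Sum>e<N. x ^ cross_dist k j * (x ^ 3) ^ e)"
    by (intro sum.cong refl) (simp add: power_add power_mult)
  finally show ?thesis by (simp add: sum_distrib_left)
qed

lemma sum_column_last:
  fixes x :: "'a::comm_ring_1"
  shows "(\<Sum>i=1..Suc N. x ^ phen_dist (i, j) (Suc N, k))
    = x ^ hex_dist j k + x ^ cross_dist j k * (\<Sum>e<N. (x ^ 3) ^ e)"
proof -
  have "(\<Sum>i=1..Suc N. x ^ phen_dist (i, j) (Suc N, k))
      = (\<Sum>e<N. x ^ phen_dist (Suc e, j) (Suc N, k)) + x ^ phen_dist (Suc N, j) (Suc N, k)"
    by (simp only: One_nat_def sum.atLeast1_atMost_eq sum.lessThan_Suc)
  also have "(\<Sum>e<N. x ^ phen_dist (Suc e, j) (Suc N, k))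
      = (\<Sum>e<N. x ^ cross_dist j k * (x ^ 3) ^ (N - Suc e))"
    by (intro sum.cong refl) (simp add: power_add power_mult)
  also have "\<dots> = (\<Sum>e<N. x ^ cross_dist j k * (x ^ 3) ^ e)"
    by (rule sum.nat_diff_reindex)
  finally show ?thesis by (simp add: sum_distrib_left)
qed

lemma sum_phen_ends:
  "(\<Sum>v\<in>phen_ends n. g v) = g (1, 4) + g (1, 5) + g (n, 1) + g (n, 2)"
  by (simp add: phen_ends_def algebra_simps)

lemma sum_phen_ad_ends:
  fixes x :: "'a::comm_ring_1"
  shows "(\<Sum>u\<in>phen_ad (Suc N). \<Sum>v\<in>phen_ends (Suc N). x ^ phen_dist u v) =
    4 * (x + x ^ 2) + 4 * (x ^ 4 + x ^ 5) * (\<Sum>e<N. (x ^ 3) ^ e)"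
proof -
  have column: "(\<Sum>u\<in>phen_ad (Suc N). x ^ phen_dist u v) =
      (\<Sum>i=1..Suc N. x ^ phen_dist (i, 0) v) + (\<Sum>i=1..Suc N. x ^ phen_dist (i, 3) v)" for v
    by (simp add: phen_ad_def sum.cartesian_product' sum.distrib)
  have "(\<Sum>u\<in>phen_ad (Suc N). \<Sum>v\<in>phen_ends (Suc N). x ^ phen_dist u v) =
      (\<Sum>v\<in>phen_ends (Suc N). \<Sum>u\<in>phen_ad (Suc N). x ^ phen_dist u v)"
    by (rule sum.swap)
  also have "\<dots> = 4 * (x + x ^ 2) + 4 * (x ^ 4 + x ^ 5) * (\<Sum>e<N. (x ^ 3) ^ e)"
    unfolding sum_phen_ends column sum_column_first sum_column_last
    by (simp add: cross_dist_def hex_dist_def algebra_simps numeral_eq_Suc)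
  finally show ?thesis .
qed

lemma sum_phen_ends_ends:
  fixes x :: "'a::comm_ring_1"
  shows "(\<Sum>u\<in>phen_ends (Suc N). \<Sum>v\<in>phen_ends (Suc N) - {u}. x ^ phen_dist u v) =
    4 * x + 4 * (x ^ 2 + x ^ 3) * (x ^ 3) ^ N"
proof -
  let ?E = "phen_ends (Suc N)"
  have "(\<Sum>u\<in>?E. \<Sum>v\<in>?E - {u}. x ^ phen_dist u v)
      = (\<Sum>u\<in>?E. \<Sum>v\<in>?E. x ^ phen_dist u v) - of_nat (card ?E)"
    by (simp add: sum_diff1 sum_subtractf phen_ends_def)
  also have "(\<Sum>u\<in>?E. \<Sum>v\<in>?E. x ^ phen_dist u v) = 4 + 4 * x + 4 * (x ^ 2 + x ^ 3) * (x ^ 3) ^ N"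
    unfolding sum_phen_ends
    by (cases N)
      (simp_all add: hex_dist_def cross_dist_def power_add power_mult algebra_simps numeral_eq_Suc)
  finally show ?thesis by (simp add: phen_ends_def)
qed

lemma phen_base_poly_2_2_closed_form:
  fixes N :: nat
  defines "x \<equiv> [:0, 1:] :: int poly"
  defines "A \<equiv> \<Sum>e<N. (x ^ 3) ^ e" and "B \<equiv> \<Sum>e<N. of_nat e * (x ^ 3) ^ e"
  shows "2 * base_poly (phen_V (Suc N)) (phen_E (Suc N)) 2 2 =
    2 * (of_nat N + 1) * x ^ 3 + (2 + 2 * x) * (2 * x ^ 3 * (of_nat N * A - B))
    + 2 * (4 * (x + x ^ 2) + 4 * (x ^ 4 + x ^ 5) * A)
    + (4 * x + 4 * (x ^ 2 + x ^ 3) * (x ^ 3) ^ N)"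
proof -
  let ?C = "phen_ad (Suc N)" and ?E = "phen_ends (Suc N)"
  have "2 * base_poly (phen_V (Suc N)) (phen_E (Suc N)) 2 2 =
      (\<Sum>u\<in>?C \<union> ?E. \<Sum>v\<in>(?C \<union> ?E) - {u}. x ^ phen_dist u v)"
    using phen_base_poly_2_2[of "Suc N"] by (simp add: x_def)
  also have "\<dots> = (\<Sum>u\<in>?C. \<Sum>v\<in>?C - {u}. x ^ phen_dist u v) + 2 * (\<Sum>u\<in>?C. \<Sum>v\<in>?E. x ^ phen_dist u v)
      + (\<Sum>u\<in>?E. \<Sum>v\<in>?E - {u}. x ^ phen_dist u v)"
    by (rule sum_offdiag_Un) (auto simp: phen_ad_def phen_ends_def phen_dist_sym)
  also have "\<dots> = 2 * (of_nat N + 1) * x ^ 3 + (2 + 2 * x) * (2 * x ^ 3 * (of_nat N * A - B))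
      + 2 * (4 * (x + x ^ 2) + 4 * (x ^ 4 + x ^ 5) * A)
      + (4 * x + 4 * (x ^ 2 + x ^ 3) * (x ^ 3) ^ N)"
    by (simp only: sum_phen_ad_ad sum_phen_ad_ends sum_phen_ends_ends A_def B_def
        of_nat_Suc add.commute[of 1 "of_nat N"])
  finally show ?thesis .
qed

section \<open>The claimed polynomial\<close>

lemma one_diff_mult_weighted_power_sum:
  fixes y :: "'a::comm_ring_1"
  shows "(1 - y) * (\<Sum>e<N. of_nat e * y ^ e) = y * (\<Sum>e<N. y ^ e) - of_nat N * y ^ N"
proof (induction N)
  case 0
  then show ?case by simp
next
  case (Suc N)
  have "(1 - y) * (\<Sum>e<Suc N. of_nat e * y ^ e)
      = (1 - y) * (\<Sum>e<N. of_nat e * y ^ e) + (1 - y) * (of_nat N * y ^ N)"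
    by (simp add: distrib_left)
  also have "\<dots> = y * (\<Sum>e<Suc N. y ^ e) - of_nat (Suc N) * y ^ Suc N"
    unfolding Suc.IH by (simp add: algebra_simps)
  finally show ?case .
qed

lemma phen_formula_2_2_closed_form:
  fixes N :: nat
  defines "x \<equiv> [:0, 1:] :: int poly"
  defines "A \<equiv> \<Sum>e<N. (x ^ 3) ^ e" and "B \<equiv> \<Sum>e<N. of_nat e * (x ^ 3) ^ e"
  shows "monom 6 1 + monom (3 * int (Suc N) - 2) 3
    + 2 * (\<Sum>k\<in>{2..Suc N}. monom (int (Suc N) - int k + 3) (3 * k - 2))
    + 4 * (\<Sum>k\<in>{1..Suc N - 1}. monom 1 (3 * k - 1))
    + monom 6 (3 * Suc N - 1)
    + 2 * (\<Sum>k\<in>{2..Suc N}. monom (int (Suc N) - int k) (3 * k))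
    + monom 2 (3 * Suc N) =
    6 * x + (3 * of_nat N + 1) * x ^ 3 + 2 * (x ^ 4 * ((of_nat N + 2) * A - B)) + 4 * (x ^ 2 * A)
    + 6 * (x ^ 2 * (x ^ 3) ^ N) + 2 * (x ^ 6 * ((of_nat N - 1) * A - B))
    + 2 * (x ^ 3 * (x ^ 3) ^ N)"
proof -
  have monom: "monom c k = of_int c * x ^ k" for c k
    by (simp add: x_def monom_altdef of_int_poly)
  have shift: "(\<Sum>k\<in>{2..Suc N}. f k) = (\<Sum>e<N. f (e + 2))" for f :: "nat \<Rightarrow> int poly"
    by (induction N) simp_all
  have pow: "x ^ (3 * e + d) = x ^ d * (x ^ 3) ^ e" for e d
    by (simp add: power_add power_mult)
  have "(\<Sum>k\<in>{2..Suc N}. monom (int (Suc N) - int k + 3) (3 * k - 2))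
      = (\<Sum>e<N. (of_nat N + 2 - of_nat e) * (x ^ 4 * (x ^ 3) ^ e))"
    unfolding shift monom by (intro sum.cong refl) (simp add: pow[symmetric] algebra_simps)
  also have "\<dots> = x ^ 4 * ((of_nat N + 2) * A - B)"
    by (simp add: A_def B_def sum_subtractf sum.distrib sum_distrib_left algebra_simps)
  finally have first: "(\<Sum>k\<in>{2..Suc N}. monom (int (Suc N) - int k + 3) (3 * k - 2))
      = x ^ 4 * ((of_nat N + 2) * A - B)" .
  have "(\<Sum>k\<in>{1..N}. monom 1 (3 * k - 1)) = (\<Sum>e<N. x ^ 2 * (x ^ 3) ^ e)"
    unfolding One_nat_def sum.atLeast1_atMost_eq monom
    by (intro sum.cong refl) (simp add: pow[symmetric])
  then have second: "(\<Sum>k\<in>{1..N}. monom 1 (3 * k - 1)) = x ^ 2 * A"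
    by (simp add: A_def sum_distrib_left)
  have "(\<Sum>k\<in>{2..Suc N}. monom (int (Suc N) - int k) (3 * k))
      = (\<Sum>e<N. (of_nat N - 1 - of_nat e) * (x ^ 6 * (x ^ 3) ^ e))"
    unfolding shift monom by (intro sum.cong refl) (simp add: pow[symmetric] algebra_simps)
  also have "\<dots> = x ^ 6 * ((of_nat N - 1) * A - B)"
    by (simp add: A_def B_def sum_subtractf sum.distrib sum_distrib_left algebra_simps)
  finally have third: "(\<Sum>k\<in>{2..Suc N}. monom (int (Suc N) - int k) (3 * k))
      = x ^ 6 * ((of_nat N - 1) * A - B)" .
  have "3 * Suc N - 1 = 3 * N + 2" "3 * Suc N = 3 * N + 3" by simp_all
  then have "x ^ (3 * Suc N - 1) = x ^ 2 * (x ^ 3) ^ N" "x ^ (3 * Suc N) = x ^ 3 * (x ^ 3) ^ N"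
    by (simp_all only: pow)
  then show ?thesis
    unfolding first second third diff_Suc_1 by (simp add: monom)
qed

lemma phen_closed_form_identity:
  fixes x A B P N :: "'a::{idom, ring_char_0}"
  assumes "(1 - x ^ 3) * A = 1 - P" and "(1 - x ^ 3) * B = x ^ 3 * A - N * P"
  shows "2 * (N + 1) * x ^ 3 + (2 + 2 * x) * (2 * x ^ 3 * (N * A - B))
      + 2 * (4 * (x + x ^ 2) + 4 * (x ^ 4 + x ^ 5) * A) + (4 * x + 4 * (x ^ 2 + x ^ 3) * P) =
    2 * (6 * x + (3 * N + 1) * x ^ 3 + 2 * (x ^ 4 * ((N + 2) * A - B))
      + 4 * (x ^ 2 * A) + 6 * (x ^ 2 * P) + 2 * (x ^ 6 * ((N - 1) * A - B)) + 2 * (x ^ 3 * P))"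
proof -
  have "x ^ 3 * A - A - P + 1 = 0" "x ^ 3 * B - B - N * P + x ^ 3 * A = 0"
    using assms by (simp_all add: algebra_simps)
  then show ?thesis by algebra
qed

theorem theorem2p1:
  fixes n :: nat
  assumes "n \<ge> 2"
  shows "base_poly (phen_V n) (phen_E n) 2 2 =
      monom 6 1 + monom (3 * int n - 2) 3
    + 2 * (\<Sum>k\<in>{2..n}. monom (int n - int k + 3) (3 * k - 2))
    + 4 * (\<Sum>k\<in>{1..n-1}. monom 1 (3 * k - 1))
    + monom 6 (3 * n - 1)
    + 2 * (\<Sum>k\<in>{2..n}. monom (int n - int k) (3 * k))
    + monom 2 (3 * n)"
proof -
  obtain N where n: "n = Suc N" using assms by (cases n) auto
  define x :: "int poly" where "x = [:0, 1:]"
  define A where "A = (\<Sum>e<N. (x ^ 3) ^ e)"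
  define B where "B = (\<Sum>e<N. of_nat e * (x ^ 3) ^ e)"
  have "(1 - x ^ 3) * A = 1 - (x ^ 3) ^ N"
    unfolding A_def by (rule one_diff_power_eq[symmetric])
  moreover have "(1 - x ^ 3) * B = x ^ 3 * A - of_nat N * (x ^ 3) ^ N"
    unfolding A_def B_def by (rule one_diff_mult_weighted_power_sum)
  ultimately have "2 * base_poly (phen_V n) (phen_E n) 2 2 =
      2 * (6 * x + (3 * of_nat N + 1) * x ^ 3 + 2 * (x ^ 4 * ((of_nat N + 2) * A - B))
        + 4 * (x ^ 2 * A) + 6 * (x ^ 2 * (x ^ 3) ^ N) + 2 * (x ^ 6 * ((of_nat N - 1) * A - B))
        + 2 * (x ^ 3 * (x ^ 3) ^ N))"
    unfolding n phen_base_poly_2_2_closed_form[of N, folded x_def, folded A_def B_def]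
    by (rule phen_closed_form_identity)
  then show ?thesis
    unfolding n phen_formula_2_2_closed_form[of N, folded x_def, folded A_def B_def] by simp
qed

end
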